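(* Let $1\le k\le s$ and let $a_1,\dots,a_k,b_1,\dots,b_s$ be $k+s$ distinct integers. Put $D=\prod_{i=1}^k\prod_{j=1}^s|a_i-b_j|$. Then $$D\ge (2/3)^s\bigl(1!\,2!\cdots(2k-1)!\bigr)^{s/(2k)}.$$ *)

theory Defs
  imports Complex_Main
begin

end

theory Submission
  imports Defs
begin

text \<open>Write \<open>A\<close>, \<open>B\<close> for the sets of the \<open>a\<^sub>i\<close> and the \<open>b\<^sub>j\<close>, and consider first \<open>|A| = |B| = k\<close>.
  The kernel equal to \<open>ln 2\<close> at \<open>0\<close> and to \<open>-ln t\<close> at \<open>t \<ge> 1\<close> is convex and decreasing on \<open>\<nat>\<close>,
  hence a constant plus a nonnegative combination of triangle kernels \<open>(m - |x - y|)\<^sub>+\<close>, which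
  are positive semidefinite. Applied to the signs \<open>+1\<close> on \<open>A\<close> and \<open>-1\<close> on \<open>B\<close>, which sum to zero,
  this shows that the logarithmic energies within \<open>A\<close> and within \<open>B\<close> exceed twice the mutual
  energy \<open>ln D\<close> by at most \<open>2k ln 2\<close>. Their sum plus \<open>2 ln D\<close> is the energy of \<open>A \<union> B\<close>, which for
  \<open>2k\<close> distinct integers is at least that of \<open>1, \<dots>, 2k\<close>, namely \<open>2 (ln 1! + \<dots> + ln (2k-1)!)\<close>.
  For \<open>|B| = s \<ge> k\<close> one averages over the \<open>k\<close>-element subsets of \<open>B\<close>; finally
  \<open>2 powr (-s/2) \<ge> (2/3)^s\<close>.\<close>

text \<open>\<open>(m - |x - y|)\<^sub>+\<close> counts the windows \<open>[z, z + m)\<close> containing both \<open>x\<close> and \<open>y\<close>, so the form is a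
  sum of squares.\<close>

lemma sum_sum_triangle_kernel_nonneg:
  fixes S :: "int set" and \<sigma> :: "int \<Rightarrow> real" and m :: int
  assumes "finite S"
  shows "0 \<le> (\<Sum>x\<in>S. \<Sum>y\<in>S. \<sigma> x * \<sigma> y * real (nat (m - \<bar>x - y\<bar>)))"
proof -
  define lo where "lo = Min (insert 0 S) - m"
  define hi where "hi = Max (insert 0 S)"
  define ind where "ind z x = (if z \<le> x \<and> x < z + m then 1 else 0 :: real)" for z x
  have triangle: "real (nat (m - \<bar>x - y\<bar>)) = (\<Sum>z\<in>{lo..hi}. ind z x * ind z y)"
    if "x \<in> S" "y \<in> S" for x y
  proof -
    have "x \<le> hi" "y \<le> hi" "lo \<le> x - m" "lo \<le> y - m"
      using that assms by (auto simp: hi_def lo_def)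
    then have "(\<Sum>z\<in>{lo..hi}. ind z x * ind z y) = (\<Sum>z\<in>{max x y - m + 1..min x y}. 1)"
      by (intro sum.mono_neutral_cong_right) (auto simp: ind_def)
    then show ?thesis by simp
  qed
  have "(\<Sum>x\<in>S. \<Sum>y\<in>S. \<sigma> x * \<sigma> y * real (nat (m - \<bar>x - y\<bar>)))
      = (\<Sum>x\<in>S. \<Sum>y\<in>S. \<Sum>z\<in>{lo..hi}. (\<sigma> x * ind z x) * (\<sigma> y * ind z y))"
    by (intro sum.cong refl) (simp add: triangle sum_distrib_left mult_ac)
  also have "\<dots> = (\<Sum>z\<in>{lo..hi}. (\<Sum>x\<in>S. \<sigma> x * ind z x) * (\<Sum>y\<in>S. \<sigma> y * ind z y))"
    by (simp add: sum_product sum.swap[where B = "{lo..hi}"])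
  also have "\<dots> \<ge> 0"
    by (intro sum_nonneg) simp
  finally show ?thesis .
qed

lemma sum_second_diff_telescope:
  fixes h :: "nat \<Rightarrow> real"
  assumes "t < N"
  shows "(\<Sum>m = t+1..<N. h (m+1) - 2 * h m + h (m-1)) = (h N - h (N-1)) - (h (t+1) - h t)"
proof -
  let ?d = "\<lambda>i. h (Suc i) - h i"
  have "{t+1..<N} = {t+1..<(N-1)+1}"
    using assms by simp
  then have "(\<Sum>m = t+1..<N. h (m+1) - 2 * h m + h (m-1))
      = (\<Sum>i = t..<N-1. h (i+2) - 2 * h (i+1) + h i)"
    by (simp only: sum.shift_bounds_nat_ivl) simp
  also have "\<dots> = (\<Sum>i = t..<N-1. ?d (Suc i) - ?d i)"
    by (simp add: algebra_simps numeral_2_eq_2)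
  also have "\<dots> = ?d (N-1) - ?d t"
    using assms by (intro sum_Suc_diff') simp
  finally show ?thesis
    using assms by simp
qed

text \<open>Truncated subtraction makes \<open>m - t\<close> the hinge function \<open>(m - t)\<^sub>+\<close>.\<close>

lemma hinge_expansion:
  fixes h :: "nat \<Rightarrow> real"
  assumes "t \<le> N"
  shows "h t = h N + (h (N-1) - h N) * real (N - t)
                + (\<Sum>m = 1..<N. (h (m+1) - 2 * h m + h (m-1)) * real (m - t))"
  using assms
proof (induction t rule: inc_induct)
  case base
  have "(\<Sum>m = 1..<N. (h (m+1) - 2 * h m + h (m-1)) * real (m - N)) = 0"
    by (intro sum.neutral) auto
  then show ?case by simp
next
  case (step t)
  let ?c = "\<lambda>m. h (m+1) - 2 * h m + h (m-1)"
  have "(\<Sum>m = 1..<N. ?c m * real (m - t)) - (\<Sum>m = 1..<N. ?c m * real (m - Suc t))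
      = (\<Sum>m = 1..<N. if t < m then ?c m else 0)"
    by (subst sum_subtractf[symmetric], intro sum.cong refl) (auto simp: of_nat_diff algebra_simps)
  also have "\<dots> = (\<Sum>m = t+1..<N. ?c m)"
    by (rule sum.mono_neutral_cong_right) auto
  also have "\<dots> = (h N - h (N-1)) - (h (t+1) - h t)"
    using sum_second_diff_telescope[OF step.hyps(2)] .
  finally show ?case
    using step.IH step.hyps(2) by (simp add: of_nat_diff algebra_simps)
qed

lemma sum_sum_convex_kernel_nonneg:
  fixes S :: "int set" and \<sigma> :: "int \<Rightarrow> real" and h :: "nat \<Rightarrow> real" and N :: nat
  assumes "finite S" and "(\<Sum>x\<in>S. \<sigma> x) = 0"
    and diam: "\<And>x y. x \<in> S \<Longrightarrow> y \<in> S \<Longrightarrow> \<bar>x - y\<bar> \<le> int N"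
    and convex: "\<And>m. 1 \<le> m \<Longrightarrow> m < N \<Longrightarrow> 0 \<le> h (m+1) - 2 * h m + h (m-1)"
    and decreasing: "0 \<le> h (N-1) - h N"
  shows "0 \<le> (\<Sum>x\<in>S. \<Sum>y\<in>S. \<sigma> x * \<sigma> y * h (nat \<bar>x - y\<bar>))"
proof -
  let ?c = "\<lambda>m. h (m+1) - 2 * h m + h (m-1)"
  let ?tri = "\<lambda>m x y. real (nat (int m - \<bar>x - y\<bar>))"
  let ?Q = "\<lambda>K. \<Sum>x\<in>S. \<Sum>y\<in>S. \<sigma> x * \<sigma> y * K x y"
  have tri_nonneg: "0 \<le> ?Q (?tri m)" for m
    using sum_sum_triangle_kernel_nonneg[OF \<open>finite S\<close>] .
  have expansion: "h (nat \<bar>x - y\<bar>)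
      = h N + (h (N-1) - h N) * ?tri N x y + (\<Sum>m = 1..<N. ?c m * ?tri m x y)"
    if "x \<in> S" "y \<in> S" for x y
  proof -
    have "real (m - nat \<bar>x - y\<bar>) = ?tri m x y" for m
      by (simp add: nat_diff_distrib)
    then show ?thesis
      using hinge_expansion[of "nat \<bar>x - y\<bar>" N h] diam[OF that] by simp
  qed
  have "?Q (\<lambda>x y. h (nat \<bar>x - y\<bar>))
      = (\<Sum>x\<in>S. \<Sum>y\<in>S. h N * (\<sigma> x * \<sigma> y) + (h (N-1) - h N) * (\<sigma> x * \<sigma> y * ?tri N x y)
          + (\<Sum>m = 1..<N. ?c m * (\<sigma> x * \<sigma> y * ?tri m x y)))"
    by (intro sum.cong refl) (simp add: expansion distrib_left sum_distrib_left mult_ac)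
  also have "\<dots> = h N * (\<Sum>x\<in>S. \<sigma> x) * (\<Sum>y\<in>S. \<sigma> y) + (h (N-1) - h N) * ?Q (?tri N)
        + (\<Sum>m = 1..<N. ?c m * ?Q (?tri m))"
    by (simp only: sum.distrib sum_distrib_left sum_product mult_ac
        sum.swap[where A = S and B = "{1..<N}"])
  also have "\<dots> \<ge> 0"
    unfolding assms(2) mult_zero_right mult_zero_left add_0
    by (intro add_nonneg_nonneg mult_nonneg_nonneg sum_nonneg decreasing convex tri_nonneg) auto
  finally show ?thesis .
qed

definition log_energy :: "int set \<Rightarrow> real" where
  "log_energy S = (\<Sum>x\<in>S. \<Sum>y\<in>S - {x}. ln (real_of_int \<bar>x - y\<bar>))"

definition mutual_log_energy :: "int set \<Rightarrow> int set \<Rightarrow> real" where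
  "mutual_log_energy A B = (\<Sum>x\<in>A. \<Sum>y\<in>B. ln (real_of_int \<bar>x - y\<bar>))"

lemma mutual_log_energy_commute: "mutual_log_energy B A = mutual_log_energy A B"
  unfolding mutual_log_energy_def by (subst sum.swap) (simp add: abs_minus_commute)

lemma sum_offdiag_Un_disjoint:
  fixes f :: "'a \<Rightarrow> 'a \<Rightarrow> 'b::comm_monoid_add"
  assumes "finite A" "finite B" "A \<inter> B = {}"
  shows "(\<Sum>x\<in>A \<union> B. \<Sum>y\<in>(A \<union> B) - {x}. f x y)
       = (\<Sum>x\<in>A. \<Sum>y\<in>A - {x}. f x y) + (\<Sum>x\<in>B. \<Sum>y\<in>B - {x}. f x y)
         + (\<Sum>x\<in>A. \<Sum>y\<in>B. f x y) + (\<Sum>x\<in>B. \<Sum>y\<in>A. f x y)"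
proof -
  have "(\<Sum>y\<in>(A \<union> B) - {x}. f x y) = (\<Sum>y\<in>A - {x}. f x y) + (\<Sum>y\<in>B. f x y)"
    if "x \<in> A" for x
  proof -
    have "(A \<union> B) - {x} = (A - {x}) \<union> B" using that assms(3) by auto
    then show ?thesis using assms by (simp add: sum.union_disjoint Int_Diff Diff_Int_distrib2)
  qed
  moreover have "(\<Sum>y\<in>(A \<union> B) - {x}. f x y) = (\<Sum>y\<in>B - {x}. f x y) + (\<Sum>y\<in>A. f x y)"
    if "x \<in> B" for x
  proof -
    have "(A \<union> B) - {x} = (B - {x}) \<union> A" "(B - {x}) \<inter> A = {}" using that assms(3) by auto
    then show ?thesis using assms by (simp add: sum.union_disjoint)
  qed
  ultimately show ?thesis
    using assms by (simp add: sum.union_disjoint sum.distrib ac_simps cong: sum.cong)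
qed

lemma log_energy_Un_disjoint:
  assumes "finite A" "finite B" "A \<inter> B = {}"
  shows "log_energy (A \<union> B) = log_energy A + log_energy B + 2 * mutual_log_energy A B"
  using sum_offdiag_Un_disjoint[OF assms, of "\<lambda>x y. ln (real_of_int \<bar>x - y\<bar>)"]
    mutual_log_energy_commute[of A B]
  by (simp add: log_energy_def mutual_log_energy_def)

text \<open>The value \<open>ln 2\<close> at \<open>0\<close> is the smallest that keeps the kernel convex; it produces the
  factor \<open>2 powr (-s/2)\<close>, weakened to \<open>(2/3)^s\<close> in the theorem.\<close>

definition log_kernel :: "nat \<Rightarrow> real" where
  "log_kernel t = (if t = 0 then ln 2 else - ln (real t))"

lemma log_kernel_convex:
  assumes "1 \<le> m"
  shows "0 \<le> log_kernel (m+1) - 2 * log_kernel m + log_kernel (m-1)"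
proof (cases "m = 1")
  case True
  then show ?thesis by (simp add: log_kernel_def)
next
  case False
  with assms have "2 \<le> m" by simp
  then have pos: "0 < real (m+1)" "0 < real (m-1)" "0 < real m"
    by simp_all
  have "real (m+1) * real (m-1) \<le> real m * real m"
    using assms by (simp add: of_nat_diff algebra_simps)
  then have "ln (real (m+1) * real (m-1)) \<le> ln (real m * real m)"
    using pos by (simp del: of_nat_add of_nat_diff)
  then have "ln (real (m+1)) + ln (real (m-1)) \<le> 2 * ln (real m)"
    using pos by (simp only: ln_mult) simp
  then show ?thesis
    using \<open>2 \<le> m\<close> by (simp add: log_kernel_def)
qed

lemma antimono_log_kernel: "antimono log_kernel"
proof (rule antimonoI)
  fix m n :: nat
  assume "m \<le> n"
  moreover have "- ln (real n) \<le> ln 2" if "0 < n"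
  proof -
    have "0 \<le> ln (real n)" using that by simp
    then show ?thesis using ln_gt_zero[of 2] by linarith
  qed
  ultimately show "log_kernel n \<le> log_kernel m"
    by (cases "m = 0") (auto simp: log_kernel_def)
qed

lemma log_kernel_nat_abs:
  fixes x y :: int
  assumes "x \<noteq> y"
  shows "log_kernel (nat \<bar>x - y\<bar>) = - ln (real_of_int \<bar>x - y\<bar>)"
proof -
  have "real (nat \<bar>x - y\<bar>) = real_of_int \<bar>x - y\<bar>"
    by (simp only: of_nat_nat abs_ge_zero)
  then show ?thesis
    using assms by (simp add: log_kernel_def)
qed

lemma sum_offdiag_signed_log_Un_disjoint:
  fixes A B :: "int set"
  defines "\<sigma> x \<equiv> if x \<in> A then 1 else - 1 :: real"
  assumes "finite A" "finite B" "A \<inter> B = {}"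
  shows "(\<Sum>x\<in>A \<union> B. \<Sum>y\<in>(A \<union> B) - {x}. \<sigma> x * \<sigma> y * ln (real_of_int \<bar>x - y\<bar>))
       = log_energy A + log_energy B - 2 * mutual_log_energy A B"
proof -
  let ?lg = "\<lambda>x y :: int. ln (real_of_int \<bar>x - y\<bar>)"
  have "(\<Sum>x\<in>A. \<Sum>y\<in>A - {x}. \<sigma> x * \<sigma> y * ?lg x y) = log_energy A"
    by (simp add: \<sigma>_def log_energy_def)
  moreover have "(\<Sum>x\<in>B. \<Sum>y\<in>B - {x}. \<sigma> x * \<sigma> y * ?lg x y) = log_energy B"
    using assms(4) unfolding log_energy_def by (intro sum.cong refl) (auto simp: \<sigma>_def)
  moreover have "(\<Sum>x\<in>A. \<Sum>y\<in>B. \<sigma> x * \<sigma> y * ?lg x y) = - mutual_log_energy A B"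
    using assms(4) unfolding mutual_log_energy_def sum_negf[symmetric]
    by (intro sum.cong refl) (auto simp: \<sigma>_def)
  moreover have "(\<Sum>x\<in>B. \<Sum>y\<in>A. \<sigma> x * \<sigma> y * ?lg x y) = - mutual_log_energy B A"
    using assms(4) unfolding mutual_log_energy_def sum_negf[symmetric]
    by (intro sum.cong refl) (auto simp: \<sigma>_def)
  ultimately show ?thesis
    using sum_offdiag_Un_disjoint[OF assms(2-4), of "\<lambda>x y. \<sigma> x * \<sigma> y * ?lg x y"]
    by (simp add: mutual_log_energy_commute[of A B])
qed

lemma log_energy_balanced_bound:
  assumes "finite A" "finite B" "A \<inter> B = {}" "card A = card B"
  shows "log_energy A + log_energy B - 2 * mutual_log_energy A B \<le> 2 * real (card A) * ln 2"
proof -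
  define S where "S = A \<union> B"
  define \<sigma> :: "int \<Rightarrow> real" where "\<sigma> x = (if x \<in> A then 1 else -1)" for x
  define N where "N = nat (Max (insert 0 S) - Min (insert 0 S))"
  have "finite S"
    using assms by (simp add: S_def)
  have "(\<Sum>x\<in>B. \<sigma> x) = (\<Sum>x\<in>B. -1)"
    using assms(3) by (intro sum.cong) (auto simp: \<sigma>_def)
  then have sum_zero: "(\<Sum>x\<in>S. \<sigma> x) = 0"
    using assms by (simp add: S_def \<sigma>_def sum.union_disjoint)
  have diam: "\<bar>x - y\<bar> \<le> int N" if "x \<in> S" "y \<in> S" for x y
  proof -
    have "x \<le> Max (insert 0 S)" "y \<le> Max (insert 0 S)"
      and "Min (insert 0 S) \<le> x" "Min (insert 0 S) \<le> y"
      using that \<open>finite S\<close> by auto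
    then show ?thesis by (simp add: N_def)
  qed
  have row: "(\<Sum>y\<in>S. \<sigma> x * \<sigma> y * log_kernel (nat \<bar>x - y\<bar>))
      = ln 2 - (\<Sum>y\<in>S - {x}. \<sigma> x * \<sigma> y * ln (real_of_int \<bar>x - y\<bar>))" if "x \<in> S" for x
  proof -
    have "(\<Sum>y\<in>S - {x}. \<sigma> x * \<sigma> y * log_kernel (nat \<bar>x - y\<bar>))
        = - (\<Sum>y\<in>S - {x}. \<sigma> x * \<sigma> y * ln (real_of_int \<bar>x - y\<bar>))"
      unfolding sum_negf[symmetric] by (intro sum.cong refl) (simp add: log_kernel_nat_abs)
    moreover have "\<sigma> x * \<sigma> x * log_kernel 0 = ln 2"
      by (simp add: \<sigma>_def log_kernel_def)
    ultimately show ?thesis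
      using that \<open>finite S\<close> by (simp add: sum.remove)
  qed
  have "0 \<le> (\<Sum>x\<in>S. \<Sum>y\<in>S. \<sigma> x * \<sigma> y * log_kernel (nat \<bar>x - y\<bar>))"
    using antimonoD[OF antimono_log_kernel, of "N - 1" N]
    by (intro sum_sum_convex_kernel_nonneg[OF \<open>finite S\<close> sum_zero diam log_kernel_convex]) auto
  also have "\<dots> = real (card S) * ln 2
      - (\<Sum>x\<in>S. \<Sum>y\<in>S - {x}. \<sigma> x * \<sigma> y * ln (real_of_int \<bar>x - y\<bar>))"
    by (simp add: row sum_subtractf)
  also have "\<dots>
      = 2 * real (card A) * ln 2 - (log_energy A + log_energy B - 2 * mutual_log_energy A B)"
    using sum_offdiag_signed_log_Un_disjoint[OF assms(1-3)] assms
    by (simp add: S_def \<sigma>_def card_Un_disjoint)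
  finally show ?thesis
    by simp
qed

lemma fact_card_le_prod_diff:
  fixes S :: "int set" and b :: int
  assumes "finite S" and "\<forall>y\<in>S. y < b"
  shows "fact (card S) \<le> (\<Prod>y\<in>S. b - y)"
  using assms
proof (induction rule: finite_linorder_min_induct)
  case empty
  then show ?case by simp
next
  case (insert a S)
  have "a \<notin> S"
    using insert.hyps(2) by auto
  have "insert a S \<subseteq> {a..<b}"
    using insert by auto
  then have "int (card (insert a S)) \<le> b - a"
    using card_mono[of "{a..<b}" "insert a S"] by (simp add: le_nat_iff)
  then have "int (card S + 1) \<le> b - a"
    using insert.hyps(1) \<open>a \<notin> S\<close> by simp
  moreover have "fact (card S) \<le> (\<Prod>y\<in>S. b - y)"
    using insert by simp
  ultimately have "int (card S + 1) * fact (card S) \<le> (b - a) * (\<Prod>y\<in>S. b - y)"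
    by (intro mult_mono) auto
  then show ?case
    using insert.hyps(1) \<open>a \<notin> S\<close> by simp
qed

lemma log_energy_ge_sum_ln_fact:
  assumes "finite S"
  shows "2 * (\<Sum>m = 1..card S - 1. ln (fact m)) \<le> log_energy S"
  using assms
proof (induction rule: finite_linorder_max_induct)
  case empty
  then show ?case by (simp add: log_energy_def)
next
  case (insert b S)
  have "b \<notin> S"
    using insert.hyps(2) by auto
  have "real_of_int (fact (card S)) \<le> real_of_int (\<Prod>y\<in>S. b - y)"
    using fact_card_le_prod_diff[OF insert.hyps] by (simp only: of_int_le_iff)
  then have "ln (fact (card S)) \<le> ln (real_of_int (\<Prod>y\<in>S. b - y))"
    unfolding of_int_fact by (rule ln_mono) simp
  also have "\<dots> = (\<Sum>y\<in>S. ln (real_of_int (b - y)))"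
    unfolding of_int_prod using insert.hyps by (intro ln_prod) auto
  also have "\<dots> = mutual_log_energy S {b}"
    using insert.hyps(2) unfolding mutual_log_energy_def by (intro sum.cong) auto
  finally have new_pairs: "ln (fact (card S)) \<le> mutual_log_energy S {b}" .
  have "log_energy (insert b S) = log_energy S + 2 * mutual_log_energy S {b}"
    using log_energy_Un_disjoint[of S "{b}"] insert.hyps(1) \<open>b \<notin> S\<close>
    by (simp add: log_energy_def)
  moreover have "(\<Sum>m = 1..card (insert b S) - 1. ln (fact m :: real))
      = (\<Sum>m = 1..card S - 1. ln (fact m)) + ln (fact (card S))"
    using insert.hyps(1) \<open>b \<notin> S\<close> by (cases "card S") simp_all
  ultimately show ?case
    using insert.IH new_pairs by simp
qed

lemma mutual_log_energy_ge_equal_card: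
  assumes "finite A" "finite B" "A \<inter> B = {}" "card A = k" "card B = k"
  shows "((\<Sum>m = 1..2*k-1. ln (fact m)) - real k * ln 2) / 2 \<le> mutual_log_energy A B"
proof -
  have "card (A \<union> B) = 2 * k"
    using assms by (simp add: card_Un_disjoint)
  then have "2 * (\<Sum>m = 1..2*k-1. ln (fact m))
      \<le> log_energy A + log_energy B + 2 * mutual_log_energy A B"
    using log_energy_ge_sum_ln_fact[of "A \<union> B"] log_energy_Un_disjoint[OF assms(1-3)] assms(1,2)
    by simp
  moreover have "log_energy A + log_energy B - 2 * mutual_log_energy A B \<le> 2 * real k * ln 2"
    using log_energy_balanced_bound[OF assms(1-3)] assms(4,5) by simp
  ultimately show ?thesis
    by simp
qed

text \<open>Induction removing an element of maximal weight: the remaining elements have average weight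
  at least \<open>c / k\<close>, hence so does the removed one.\<close>

lemma sum_ge_of_subset_sums_ge:
  fixes Q :: "'a \<Rightarrow> real"
  assumes "finite B" "1 \<le> k" "k \<le> card B"
    and "\<And>C. C \<subseteq> B \<Longrightarrow> card C = k \<Longrightarrow> c \<le> sum Q C"
  shows "c * real (card B) / real k \<le> sum Q B"
  using assms(1,3,4)
proof (induction B rule: finite_ranking_induct[where f = Q])
  case empty
  then show ?case
    using assms(2) by simp
next
  case (insert x S)
  show ?case
  proof (cases "x \<in> S")
    case True
    then show ?thesis
      using insert by (simp add: insert_absorb)
  next
    case False
    then have card_insert: "card (insert x S) = card S + 1"
      using insert.hyps(1) by simp
    show ?thesis
    proof (cases "k \<le> card S")
      case False
      then have "card (insert x S) = k"
        using insert.prems(1) card_insert by simp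
      then show ?thesis
        using insert.prems(2)[of "insert x S"] assms(2) by simp
    next
      case True
      have IH: "c * real (card S) / real k \<le> sum Q S"
        using insert.IH True insert.prems(2) by blast
      also have "\<dots> \<le> real (card S) * Q x"
        using sum_mono[of S Q "\<lambda>_. Q x"] insert.hyps(2) by simp
      finally have "c / real k \<le> Q x"
        using True assms(2) by (simp add: field_simps)
      then show ?thesis
        using IH insert.hyps(1) False card_insert assms(2) by (simp add: field_simps)
    qed
  qed
qed

lemma mutual_log_energy_ge:
  assumes "finite A" "finite B" "A \<inter> B = {}" "card A = k" "1 \<le> k" "k \<le> card B"
  shows "((\<Sum>m = 1..2*k-1. ln (fact m)) - real k * ln 2) / 2 * real (card B) / real k
          \<le> mutual_log_energy A B"
proof -
  let ?Q = "\<lambda>y. \<Sum>x\<in>A. ln (real_of_int \<bar>x - y\<bar>)"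
  have column_sums: "mutual_log_energy A C = sum ?Q C" for C
    unfolding mutual_log_energy_def by (rule sum.swap)
  show ?thesis
    unfolding column_sums
  proof (rule sum_ge_of_subset_sums_ge[OF assms(2,5,6)])
    fix C assume "C \<subseteq> B" "card C = k"
    then show "((\<Sum>m = 1..2*k-1. ln (fact m)) - real k * ln 2) / 2 \<le> sum ?Q C"
      using mutual_log_energy_ge_equal_card[OF assms(1), of C k] assms(2-4)
      by (auto simp: column_sums dest: finite_subset)
  qed
qed

lemma prod_abs_diff_eq_exp_mutual_log_energy:
  assumes "finite A" "finite B" "A \<inter> B = {}"
  shows "(\<Prod>x\<in>A. \<Prod>y\<in>B. real_of_int \<bar>x - y\<bar>) = exp (mutual_log_energy A B)"
proof -
  have "exp (ln (real_of_int \<bar>x - y\<bar>)) = real_of_int \<bar>x - y\<bar>" if "x \<in> A" "y \<in> B" for x y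
    using that assms(3) by (intro exp_ln) auto
  then show ?thesis
    unfolding mutual_log_energy_def using assms(1,2) by (simp add: exp_sum cong: prod.cong)
qed

lemma two_thirds_power_le: "(2/3 :: real) ^ s \<le> exp (- real s * ln 2 / 2)"
proof -
  have "(2/3 :: real) ^ 2 \<le> 1/2"
    by (simp add: power2_eq_square)
  then have "ln ((2/3 :: real) ^ 2) \<le> ln (1/2)"
    by (rule ln_mono) simp
  then have "2 * ln (2/3 :: real) \<le> - ln 2"
    by (simp add: ln_realpow ln_div)
  then have "real s * (2 * ln (2/3 :: real)) \<le> real s * (- ln 2)"
    by (rule mult_left_mono) simp
  then have "exp (ln ((2/3 :: real) ^ s)) \<le> exp (- real s * ln 2 / 2)"
    by (simp add: ln_realpow)
  then show ?thesis
    by simp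
qed

theorem lemma3p3:
  fixes k s :: nat and a b :: "nat \<Rightarrow> int"
  assumes "1 \<le> k" and "k \<le> s"
    and "inj_on a {1..k}" and "inj_on b {1..s}"
    and "a ` {1..k} \<inter> b ` {1..s} = {}"
  shows "real_of_int (\<Prod>i=1..k. \<Prod>j=1..s. \<bar>a i - b j\<bar>)
          \<ge> (2/3) ^ s * (real (\<Prod>m=1..2*k-1. fact m)) powr (real s / (2 * real k))"
proof -
  let ?A = "a ` {1..k}" and ?B = "b ` {1..s}"
  let ?F = "\<Sum>m = 1..2*k-1. ln (fact m :: real)"
  have card: "card ?A = k" "card ?B = s"
    using assms(3,4) by (simp_all add: card_image)
  have "ln (real (\<Prod>m=1..2*k-1. fact m)) = ?F"
    by (simp add: of_nat_prod ln_prod)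
  then have "(real (\<Prod>m=1..2*k-1. fact m)) powr (real s / (2 * real k))
      = exp (real s / (2 * real k) * ?F)"
    by (simp add: powr_def)
  then have "(2/3) ^ s * (real (\<Prod>m=1..2*k-1. fact m)) powr (real s / (2 * real k))
      \<le> exp (- real s * ln 2 / 2) * exp (real s / (2 * real k) * ?F)"
    using two_thirds_power_le[of s] by simp
  also have "\<dots> = exp ((?F - real k * ln 2) / 2 * real s / real k)"
    using assms(1) by (simp add: exp_add[symmetric] field_simps)
  also have "\<dots> \<le> exp (mutual_log_energy ?A ?B)"
    using mutual_log_energy_ge[of ?A ?B k] assms card by simp
  also have "\<dots> = (\<Prod>x\<in>?A. \<Prod>y\<in>?B. real_of_int \<bar>x - y\<bar>)"
    using prod_abs_diff_eq_exp_mutual_log_energy[of ?A ?B] assms(5) by simp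
  also have "\<dots> = real_of_int (\<Prod>i=1..k. \<Prod>j=1..s. \<bar>a i - b j\<bar>)"
    using assms(3,4) by (simp add: prod.reindex)
  finally show ?thesis .
qed

end
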